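(* Let $Q=2^q$, $n\ge1$, $\varepsilon\in[0,1]$, $d\in[0,1]$ with $dn$ an integer, $\delta_1,\delta_2\ge0$, and let $A\subseteq[Q]^n$, $B\subseteq[Q]^n$ be $(d,2\varepsilon)$-diverse with $|A|\ge Q^{n(1-\delta_1)}$ and $|B|\ge Q^{n(1-\delta_2)}$. If $W$ is drawn from $\mathcal{W}_{Q,\varepsilon}$, then with probability at least $1/2$, $$\mathcal{R}^{(0)}_{W,n}\ge 2q\left(1-\left(\frac{\delta_1+\delta_2}{2}+d\right)\right)-2.$$
   Context: Fix an integer $q\ge1$, $Q=2^q$, $[Q]=\{1,\dots,Q\}$, and a symbol $\phi\notin[Q]$. A channel is $W=(W_1,W_2)$ with $W_i:[Q]^2\to[Q]\cup\{\phi\}$; $W^{(n)}_i(x,y)=(W_i(x_1,y_1),\dots,W_i(x_n,y_n))$ for $x,y\in[Q]^n$. A zero-error code of block length $n$ with message sets $[M_1],[M_2]$ consists of encoders $E_i:[M_i]\to[Q]^n$ and decoders $D_i:([Q]\cup\{\phi\})^n\to[M_i]$ with $D_i(W^{(n)}_i(E_1(m_1),E_2(m_2)))=m_i$ for $i=1,2$ and all message pairs; $\mathcal{R}^{(0)}_{W,n}$ is the supremum of $\frac1n\log_2(M_1M_2)$ over such codes. $\mathcal{W}_{Q,\varepsilon}$ is the distribution over channels in which, independently for every $(x,y)\in[Q]^2$, $W(x,y)=(\phi,\phi)$ with probability $\varepsilon$ and $W(x,y)=(x,y)$ otherwise. A pair $(x^{(n)},y^{(n)})\in[Q]^n\times[Q]^n$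 is $(d,\varepsilon)$-diverse if for every index set $I\subseteq[n]$ with $|I|=dn$, $|\{(x_j,y_j):j\in I\}|>\varepsilon Q^2$; sets $A,B\subseteq[Q]^n$ are $(d,\varepsilon)$-diverse if every $(x^{(n)},y^{(n)})\in A\times B$ is $(d,\varepsilon)$-diverse. *)

theory Defs
  imports "HOL-Probability.Probability"
begin

text \<open>Symbols of [Q] are the naturals 1..Q; the erasure symbol phi is None,
  so outputs are of type nat option.\<close>

type_synonym channel = "nat \<times> nat \<Rightarrow> nat option \<times> nat option"

definition blocks :: "nat \<Rightarrow> nat \<Rightarrow> nat list set" where
  "blocks Q n = {xs. length xs = n \<and> set xs \<subseteq> {1..Q}}"

definition chan_n :: "(nat \<times> nat \<Rightarrow> nat option) \<Rightarrow> nat list \<Rightarrow> nat list \<Rightarrow> nat option list" where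
  "chan_n Wi x y = map Wi (zip x y)"

definition zero_error_code ::
  "nat \<Rightarrow> channel \<Rightarrow> nat \<Rightarrow> nat \<Rightarrow> nat \<Rightarrow> bool" where
  "zero_error_code Q W n M1 M2 \<longleftrightarrow>
     (\<exists>(E1 :: nat \<Rightarrow> nat list) (E2 :: nat \<Rightarrow> nat list)
        (D1 :: nat option list \<Rightarrow> nat) (D2 :: nat option list \<Rightarrow> nat).
        (\<forall>m\<in>{1..M1}. E1 m \<in> blocks Q n) \<and> (\<forall>m\<in>{1..M2}. E2 m \<in> blocks Q n) \<and>
        (\<forall>z. D1 z \<in> {1..M1}) \<and> (\<forall>z. D2 z \<in> {1..M2}) \<and>
        (\<forall>m1\<in>{1..M1}. \<forall>m2\<in>{1..M2}.
           D1 (chan_n (fst \<circ> W) (E1 m1) (E2 m2)) = m1 \<and>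
           D2 (chan_n (snd \<circ> W) (E1 m1) (E2 m2)) = m2))"

definition zero_error_rate :: "nat \<Rightarrow> channel \<Rightarrow> nat \<Rightarrow> real" where
  "zero_error_rate Q W n =
     Sup {log 2 (real (M1 * M2)) / real n | M1 M2. zero_error_code Q W n M1 M2}"

definition channel_dist :: "nat \<Rightarrow> real \<Rightarrow> channel pmf" where
  "channel_dist Q eps =
     map_pmf (\<lambda>e. \<lambda>(x, y). if e (x, y) then (None, None) else (Some x, Some y))
       (Pi_pmf ({1..Q} \<times> {1..Q}) False (\<lambda>_. bernoulli_pmf eps))"

definition diverse_pair :: "nat \<Rightarrow> nat \<Rightarrow> real \<Rightarrow> real \<Rightarrow> nat list \<Rightarrow> nat list \<Rightarrow> bool" where
  "diverse_pair Q n d eps x y \<longleftrightarrow>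
     (\<forall>I. I \<subseteq> {0..<n} \<and> real (card I) = d * real n \<longrightarrow>
          real (card ((\<lambda>j. (x ! j, y ! j)) ` I)) > eps * real Q ^ 2)"

definition diverse_sets :: "nat \<Rightarrow> nat \<Rightarrow> real \<Rightarrow> real \<Rightarrow> nat list set \<Rightarrow> nat list set \<Rightarrow> bool" where
  "diverse_sets Q n d eps A B \<longleftrightarrow> (\<forall>x\<in>A. \<forall>y\<in>B. diverse_pair Q n d eps x y)"

end

theory Submission
  imports Defs
begin

text \<open>With probability at least 1/2 (Markov) at most 2 eps Q^2 of the Q^2 symbol pairs are
  erased. For such a channel the (d, 2 eps)-diversity of A \<times> B, with D = d n, leaves every input
  pair of A \<times> B with fewer than D erased positions. A maximal subset of A of minimum Hamming
  distance D loses at most a factor 2^n Q^D, and likewise for B. Two codewords of one user whose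
  outputs coincide can differ only at erased positions, so these subsets are the codebooks of a
  zero-error code, of sum rate at least 2q(1 - (\<delta>1 + \<delta>2)/2 - d) - 2.\<close>

lemma prob_Pi_bernoulli_count_le_twice_mean:
  fixes K :: "'a set" and eps :: real
  assumes K: "finite K" and eps: "0 \<le> eps" "eps \<le> 1"
  shows "measure_pmf.prob (Pi_pmf K False (\<lambda>_. bernoulli_pmf eps))
           {e. real (card {p\<in>K. e p}) \<le> 2 * eps * real (card K)} \<ge> 1/2"
proof -
  define M where "M = Pi_pmf K False (\<lambda>_. bernoulli_pmf eps)"
  define X where "X e = (\<Sum>p\<in>K. of_bool (e p) :: real)" for e
  define \<mu> where "\<mu> = eps * real (card K)"
  have X_eq: "X e = real (card {p\<in>K. e p})" for e
    unfolding X_def using K by (simp add: of_bool_def sum.If_cases Int_def)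
  have X_nonneg: "X e \<ge> 0" for e
    unfolding X_def by (intro sum_nonneg) auto
  have integrable_X: "integrable M X"
    unfolding X_def by (intro Bochner_Integration.integrable_sum measure_pmf.integrable_const_bound[where B=1]) auto
  have "measure_pmf.expectation M (\<lambda>e. of_bool (e p)) = eps" if "p \<in> K" for p
  proof -
    have "measure_pmf.expectation M (\<lambda>e. of_bool (e p))
        = measure_pmf.expectation (map_pmf (\<lambda>e. e p) M) (of_bool :: bool \<Rightarrow> real)"
      by simp
    also have "map_pmf (\<lambda>e. e p) M = bernoulli_pmf eps"
      unfolding M_def using Pi_pmf_component[OF K, of p False] that by simp
    finally show ?thesis using eps by simp
  qed
  then have E_X: "measure_pmf.expectation M X = \<mu>"
    unfolding X_def \<mu>_def
    by (subst Bochner_Integration.integral_sum) (auto intro: measure_pmf.integrable_const_bound[where B=1])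
  have "measure_pmf.prob M {e. X e > 2 * \<mu>} \<le> 1/2"
  proof (cases "\<mu> > 0")
    case True
    have "measure_pmf.prob M {e. X e > 2 * \<mu>} \<le> measure_pmf.prob M {e\<in>space M. X e \<ge> 2 * \<mu>}"
      by (intro measure_pmf.finite_measure_mono) auto
    also have "\<dots> \<le> \<mu> / (2 * \<mu>)"
      using integral_Markov_inequality_measure[OF integrable_X, where A=UNIV and c="2 * \<mu>"] True X_nonneg E_X by simp
    finally show ?thesis using True by simp
  next
    case False
    then have "\<mu> = 0" using eps by (simp add: \<mu>_def zero_less_mult_iff)
    have "measure_pmf.prob M {e. X e > 2 * \<mu>} \<le> measure_pmf.prob M {e\<in>space M. X e \<ge> 1}"
      using \<open>\<mu> = 0\<close> by (intro measure_pmf.finite_measure_mono) (auto simp: X_eq)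
    also have "\<dots> \<le> \<mu> / 1"
      using integral_Markov_inequality_measure[OF integrable_X, where A=UNIV and c=1] X_nonneg E_X by simp
    finally show ?thesis using \<open>\<mu> = 0\<close> by simp
  qed
  moreover have "measure_pmf.prob M {e. X e \<le> 2 * \<mu>} = 1 - measure_pmf.prob M {e. X e > 2 * \<mu>}"
    using measure_pmf.prob_compl[of "{e. X e > 2 * \<mu>}" M]
    by (simp add: Compl_eq_Diff_UNIV[symmetric] not_less Collect_neg_eq[symmetric])
  ultimately show ?thesis unfolding M_def X_eq \<mu>_def by (simp add: mult.assoc)
qed

definition diff_positions :: "nat \<Rightarrow> nat list \<Rightarrow> nat list \<Rightarrow> nat set" where
  "diff_positions n x y = {j. j < n \<and> x ! j \<noteq> y ! j}"

definition min_distance_ge :: "nat \<Rightarrow> nat \<Rightarrow> nat list set \<Rightarrow> bool" where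
  "min_distance_ge n D S \<longleftrightarrow> (\<forall>x\<in>S. \<forall>y\<in>S. x \<noteq> y \<longrightarrow> D \<le> card (diff_positions n x y))"

lemma diff_positions_commute: "diff_positions n x y = diff_positions n y x"
  unfolding diff_positions_def by auto

lemma finite_blocks: "finite (blocks Q n)"
  unfolding blocks_def using finite_lists_length_eq[of "{1..Q}" n] by (simp add: conj_commute)

lemma card_blocks_agreeing_outside_le:
  assumes S: "S \<subseteq> {0..<n}"
  shows "card {a \<in> blocks Q n. \<forall>j<n. j \<notin> S \<longrightarrow> a ! j = b ! j} \<le> Q ^ card S"
proof -
  let ?T = "{a \<in> blocks Q n. \<forall>j<n. j \<notin> S \<longrightarrow> a ! j = b ! j}"
  let ?restr = "\<lambda>a. restrict ((!) a) S"
  have "finite S" using S finite_subset by blast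
  have "inj_on ?restr ?T"
  proof (rule inj_onI)
    fix a c assume a: "a \<in> ?T" and c: "c \<in> ?T" and eq: "?restr a = ?restr c"
    show "a = c"
    proof (rule nth_equalityI)
      show "length a = length c" using a c by (simp add: blocks_def)
      fix j assume "j < length a"
      then show "a ! j = c ! j"
        using a c fun_cong[OF eq, of j] by (cases "j \<in> S") (auto simp: blocks_def)
    qed
  qed
  moreover have "?restr ` ?T \<subseteq> S \<rightarrow>\<^sub>E {1..Q}"
    using S by (fastforce simp: blocks_def dest: nth_mem)
  ultimately have "card ?T \<le> card (S \<rightarrow>\<^sub>E {1..Q})"
    using \<open>finite S\<close> by (intro card_inj_on_le) (auto simp: finite_PiE)
  also have "\<dots> = Q ^ card S" by (simp add: card_PiE \<open>finite S\<close>)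
  finally show ?thesis .
qed

lemma card_hamming_ball_le:
  assumes "Q \<ge> 1"
  shows "card {a \<in> blocks Q n. card (diff_positions n a b) < D} \<le> 2 ^ n * Q ^ D"
proof -
  define I where "I = {S. S \<subseteq> {0..<n} \<and> card S \<le> D}"
  define T where "T S = {a \<in> blocks Q n. \<forall>j<n. j \<notin> S \<longrightarrow> a ! j = b ! j}" for S
  have "I \<subseteq> Pow {0..<n}" by (auto simp: I_def)
  then have "finite I" by (rule finite_subset) simp
  have "card I \<le> card (Pow {0..<n})" by (rule card_mono) (use \<open>I \<subseteq> Pow {0..<n}\<close> in auto)
  then have card_I: "card I \<le> 2 ^ n" by (simp add: card_Pow)
  have "{a \<in> blocks Q n. card (diff_positions n a b) < D} \<subseteq> (\<Union>S\<in>I. T S)"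
  proof
    fix a assume "a \<in> {a \<in> blocks Q n. card (diff_positions n a b) < D}"
    then have "diff_positions n a b \<in> I" "a \<in> T (diff_positions n a b)"
      by (auto simp: I_def T_def diff_positions_def)
    then show "a \<in> (\<Union>S\<in>I. T S)" by blast
  qed
  then have "card {a \<in> blocks Q n. card (diff_positions n a b) < D} \<le> card (\<Union>S\<in>I. T S)"
    using \<open>finite I\<close> finite_blocks by (intro card_mono) (auto simp: T_def)
  also have "\<dots> \<le> (\<Sum>S\<in>I. card (T S))" by (rule card_UN_le[OF \<open>finite I\<close>])
  also have "\<dots> \<le> (\<Sum>S\<in>I. Q ^ D)"
  proof (rule sum_mono)
    fix S assume "S \<in> I"
    then have "card (T S) \<le> Q ^ card S" unfolding T_def I_def by (intro card_blocks_agreeing_outside_le) auto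
    also have "\<dots> \<le> Q ^ D" using \<open>S \<in> I\<close> assms by (intro power_increasing) (auto simp: I_def)
    finally show "card (T S) \<le> Q ^ D" .
  qed
  also have "\<dots> \<le> 2 ^ n * Q ^ D" using card_I by simp
  finally show ?thesis .
qed

text \<open>A maximal subset of minimum distance D is covered by the Hamming balls of radius
  D - 1 around its points.\<close>
lemma ex_min_distance_subset:
  assumes A: "finite A" "A \<subseteq> blocks Q n" and "Q \<ge> 1" and "D \<ge> 1"
  shows "\<exists>A'\<subseteq>A. min_distance_ge n D A' \<and> card A \<le> card A' * (2 ^ n * Q ^ D)"
proof -
  define F where "F = {S. S \<subseteq> A \<and> min_distance_ge n D S}"
  have "finite F" unfolding F_def using A by (auto intro: finite_subset[of _ "Pow A"])
  moreover have "{} \<in> F" by (simp add: F_def min_distance_ge_def)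
  ultimately obtain A' where "A' \<in> F" and maximal: "\<And>S. S \<in> F \<Longrightarrow> A' \<subseteq> S \<Longrightarrow> A' = S"
    using finite_has_maximal[of F] by blast
  then have A': "A' \<subseteq> A" "min_distance_ge n D A'" by (auto simp: F_def)
  have "\<exists>a'\<in>A'. card (diff_positions n a a') < D" if "a \<in> A" for a
  proof (cases "a \<in> A'")
    case True
    then show ?thesis using \<open>D \<ge> 1\<close> by (intro bexI[of _ a]) (auto simp: diff_positions_def)
  next
    case False
    then have "\<not> min_distance_ge n D (insert a A')"
      using maximal[of "insert a A'"] A' \<open>a \<in> A\<close> by (auto simp: F_def)
    then show ?thesis
      using A'(2) unfolding min_distance_ge_def
      by (metis diff_positions_commute insert_iff not_le)
  qed
  then have "A \<subseteq> (\<Union>a'\<in>A'. {a \<in> blocks Q n. card (diff_positions n a a') < D})"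
    using A by blast
  moreover have "finite A'" using A'(1) A(1) finite_subset by blast
  ultimately have "card A \<le> card (\<Union>a'\<in>A'. {a \<in> blocks Q n. card (diff_positions n a a') < D})"
    using finite_blocks by (intro card_mono) auto
  also have "\<dots> \<le> (\<Sum>a'\<in>A'. card {a \<in> blocks Q n. card (diff_positions n a a') < D})"
    by (rule card_UN_le[OF \<open>finite A'\<close>])
  also have "\<dots> \<le> card A' * (2 ^ n * Q ^ D)"
    using sum_mono[of A' _ "\<lambda>_. 2 ^ n * Q ^ D"] card_hamming_ball_le[OF \<open>Q \<ge> 1\<close>] by simp
  finally show ?thesis using A' by blast
qed

lemma ex_decoder:
  assumes "X \<noteq> {}"
    and determined: "\<And>m m' k k'. m \<in> X \<Longrightarrow> m' \<in> X \<Longrightarrow> k \<in> Y \<Longrightarrow> k' \<in> Y \<Longrightarrow> f m k = f m' k' \<Longrightarrow> m = m'"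
  shows "\<exists>dec. (\<forall>z. dec z \<in> X) \<and> (\<forall>m\<in>X. \<forall>k\<in>Y. dec (f m k) = m)"
proof -
  define P where "P z m \<longleftrightarrow> m \<in> X \<and> (\<exists>k\<in>Y. f m k = z)" for z m
  define dec where "dec z = (if \<exists>m. P z m then SOME m. P z m else SOME m. m \<in> X)" for z
  have "dec z \<in> X" for z
  proof (cases "\<exists>m. P z m")
    case True
    then have "P z (dec z)" unfolding dec_def by (simp add: someI_ex)
    then show ?thesis by (simp add: P_def)
  next
    case False
    then show ?thesis using \<open>X \<noteq> {}\<close> by (simp add: dec_def some_in_eq)
  qed
  moreover have "dec (f m k) = m" if "m \<in> X" "k \<in> Y" for m k
  proof -
    have "P (f m k) m" using that by (auto simp: P_def)
    moreover have "m' = m" if "P (f m k) m'" for m'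
      using that determined \<open>m \<in> X\<close> \<open>k \<in> Y\<close> by (auto simp: P_def)
    ultimately have "(SOME m'. P (f m k) m') = m" by (rule some_equality)
    then show ?thesis using \<open>P (f m k) m\<close> by (auto simp: dec_def)
  qed
  ultimately show ?thesis by blast
qed

lemma zero_error_code_of_determined:
  assumes "A \<subseteq> blocks Q n" "B \<subseteq> blocks Q n" "finite A" "finite B" "A \<noteq> {}" "B \<noteq> {}"
    and determined1: "\<And>x x' y y'. x \<in> A \<Longrightarrow> x' \<in> A \<Longrightarrow> y \<in> B \<Longrightarrow> y' \<in> B \<Longrightarrow>
           chan_n (fst \<circ> W) x y = chan_n (fst \<circ> W) x' y' \<Longrightarrow> x = x'"
    and determined2: "\<And>x x' y y'. x \<in> A \<Longrightarrow> x' \<in> A \<Longrightarrow> y \<in> B \<Longrightarrow> y' \<in> B \<Longrightarrow>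
           chan_n (snd \<circ> W) x y = chan_n (snd \<circ> W) x' y' \<Longrightarrow> y = y'"
  shows "zero_error_code Q W n (card A) (card B)"
proof -
  obtain E1 where E1: "bij_betw E1 {1..card A} A" using ex_bij_betw_nat_finite_1[OF \<open>finite A\<close>] by blast
  obtain E2 where E2: "bij_betw E2 {1..card B} B" using ex_bij_betw_nat_finite_1[OF \<open>finite B\<close>] by blast
  have nonempty: "{1..card A} \<noteq> {}" "{1..card B} \<noteq> {}"
    using \<open>finite A\<close> \<open>finite B\<close> \<open>A \<noteq> {}\<close> \<open>B \<noteq> {}\<close> by (auto simp: Suc_le_eq card_gt_0_iff)
  have E1_in: "E1 m \<in> A" if "m \<in> {1..card A}" for m using bij_betw_apply[OF E1 that] .
  have E2_in: "E2 m \<in> B" if "m \<in> {1..card B}" for m using bij_betw_apply[OF E2 that] .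
  have E1_eq: "m = m'" if "m \<in> {1..card A}" "m' \<in> {1..card A}" "E1 m = E1 m'" for m m'
    using that bij_betw_imp_inj_on[OF E1] by (auto dest: inj_onD)
  have E2_eq: "m = m'" if "m \<in> {1..card B}" "m' \<in> {1..card B}" "E2 m = E2 m'" for m m'
    using that bij_betw_imp_inj_on[OF E2] by (auto dest: inj_onD)
  obtain D1 where D1: "\<forall>z. D1 z \<in> {1..card A}"
    "\<forall>m1\<in>{1..card A}. \<forall>m2\<in>{1..card B}. D1 (chan_n (fst \<circ> W) (E1 m1) (E2 m2)) = m1"
  proof (atomize_elim, rule ex_decoder[OF nonempty(1)])
    fix m m' k k' assume m: "m \<in> {1..card A}" "m' \<in> {1..card A}" and k: "k \<in> {1..card B}" "k' \<in> {1..card B}"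
      and "chan_n (fst \<circ> W) (E1 m) (E2 k) = chan_n (fst \<circ> W) (E1 m') (E2 k')"
    then have "E1 m = E1 m'" using determined1[OF E1_in E1_in E2_in E2_in] by blast
    then show "m = m'" using E1_eq m by blast
  qed
  obtain D2 where D2: "\<forall>z. D2 z \<in> {1..card B}"
    "\<forall>m2\<in>{1..card B}. \<forall>m1\<in>{1..card A}. D2 (chan_n (snd \<circ> W) (E1 m1) (E2 m2)) = m2"
  proof (atomize_elim, rule ex_decoder[OF nonempty(2)])
    fix m m' k k' assume m: "m \<in> {1..card B}" "m' \<in> {1..card B}" and k: "k \<in> {1..card A}" "k' \<in> {1..card A}"
      and "chan_n (snd \<circ> W) (E1 k) (E2 m) = chan_n (snd \<circ> W) (E1 k') (E2 m')"
    then have "E2 m = E2 m'" using determined2[OF E1_in E1_in E2_in E2_in] k m by blast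
    then show "m = m'" using E2_eq m by blast
  qed
  show ?thesis
    unfolding zero_error_code_def
    by (rule exI[of _ E1], rule exI[of _ E2], rule exI[of _ D1], rule exI[of _ D2])
      (use E1_in E2_in D1 D2 assms(1,2) in blast)
qed

text \<open>An encoder is injective, since the first message is decoded whatever the second one is.\<close>
lemma zero_error_code_le_card_blocks:
  assumes "zero_error_code Q W n M1 M2"
  shows "M1 \<le> Q ^ n" "M2 \<le> Q ^ n"
proof -
  obtain E1 E2 D1 D2 where
    E1: "\<forall>m\<in>{1..M1}. E1 m \<in> blocks Q n" and E2: "\<forall>m\<in>{1..M2}. E2 m \<in> blocks Q n" and
    D: "\<forall>z. D1 z \<in> {1..M1}" "\<forall>z. D2 z \<in> {1..M2}" and
    decode: "\<forall>m1\<in>{1..M1}. \<forall>m2\<in>{1..M2}.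
       D1 (chan_n (fst \<circ> W) (E1 m1) (E2 m2)) = m1 \<and> D2 (chan_n (snd \<circ> W) (E1 m1) (E2 m2)) = m2"
    using assms unfolding zero_error_code_def by blast
  have "D1 [] \<in> {1..M1}" "D2 [] \<in> {1..M2}" using D by blast+
  then have one: "1 \<in> {1..M1}" "1 \<in> {1..M2}" by auto
  have card_blocks: "card (blocks Q n) = Q ^ n"
    unfolding blocks_def using card_lists_length_eq[of "{1..Q}" n] by (simp add: conj_commute)
  have "inj_on E1 {1..M1}"
  proof (rule inj_onI)
    fix m m' assume "m \<in> {1..M1}" "m' \<in> {1..M1}" "E1 m = E1 m'"
    have "D1 (chan_n (fst \<circ> W) (E1 m) (E2 1)) = m" "D1 (chan_n (fst \<circ> W) (E1 m') (E2 1)) = m'"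
      using decode one(2) \<open>m \<in> {1..M1}\<close> \<open>m' \<in> {1..M1}\<close> by simp_all
    then show "m = m'" using \<open>E1 m = E1 m'\<close> by simp
  qed
  then have "card {1..M1} \<le> card (blocks Q n)" using E1 finite_blocks by (intro card_inj_on_le) auto
  then show "M1 \<le> Q ^ n" using card_blocks by simp
  have "inj_on E2 {1..M2}"
  proof (rule inj_onI)
    fix m m' assume "m \<in> {1..M2}" "m' \<in> {1..M2}" "E2 m = E2 m'"
    have "D2 (chan_n (snd \<circ> W) (E1 1) (E2 m)) = m" "D2 (chan_n (snd \<circ> W) (E1 1) (E2 m')) = m'"
      using decode one(1) \<open>m \<in> {1..M2}\<close> \<open>m' \<in> {1..M2}\<close> by simp_all
    then show "m = m'" using \<open>E2 m = E2 m'\<close> by simp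
  qed
  then have "card {1..M2} \<le> card (blocks Q n)" using E2 finite_blocks by (intro card_inj_on_le) auto
  then show "M2 \<le> Q ^ n" using card_blocks by simp
qed

lemma zero_error_rate_ge:
  assumes "zero_error_code Q W n M1 M2"
  shows "log 2 (real (M1 * M2)) / real n \<le> zero_error_rate Q W n"
proof -
  let ?R = "{log 2 (real (M1 * M2)) / real n | M1 M2. zero_error_code Q W n M1 M2}"
  have "?R \<subseteq> (\<lambda>(M1, M2). log 2 (real (M1 * M2)) / real n) ` ({..Q ^ n} \<times> {..Q ^ n})"
  proof
    fix r assume "r \<in> ?R"
    then obtain a b where r: "r = log 2 (real (a * b)) / real n" and "zero_error_code Q W n a b"
      by blast
    then have "(a, b) \<in> {..Q ^ n} \<times> {..Q ^ n}" using zero_error_code_le_card_blocks by simp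
    then show "r \<in> (\<lambda>(M1, M2). log 2 (real (M1 * M2)) / real n) ` ({..Q ^ n} \<times> {..Q ^ n})"
      unfolding r by (rule rev_image_eqI) simp
  qed
  then have "bdd_above ?R" by (rule bdd_above_finite[OF finite_subset]) auto
  then show ?thesis unfolding zero_error_rate_def using assms by (intro cSup_upper) blast+
qed

definition erasure_channel :: "(nat \<times> nat \<Rightarrow> bool) \<Rightarrow> channel" where
  "erasure_channel e = (\<lambda>(x, y). if e (x, y) then (None, None) else (Some x, Some y))"

lemma channel_dist_eq_map_erasure_channel:
  "channel_dist Q eps = map_pmf erasure_channel (Pi_pmf ({1..Q} \<times> {1..Q}) False (\<lambda>_. bernoulli_pmf eps))"
  unfolding channel_dist_def erasure_channel_def ..

definition erased_positions :: "nat \<Rightarrow> (nat \<times> nat \<Rightarrow> bool) \<Rightarrow> nat list \<Rightarrow> nat list \<Rightarrow> nat set" where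
  "erased_positions n e x y = {j. j < n \<and> e (x ! j, y ! j)}"

lemma diff_positions_subset_erased_positions:
  assumes "length x = n" "length x' = n" "length y = n" "length y' = n"
  shows "chan_n (fst \<circ> erasure_channel e) x y = chan_n (fst \<circ> erasure_channel e) x' y' \<Longrightarrow>
           diff_positions n x x' \<subseteq> erased_positions n e x y"
    and "chan_n (snd \<circ> erasure_channel e) x y = chan_n (snd \<circ> erasure_channel e) x' y' \<Longrightarrow>
           diff_positions n y y' \<subseteq> erased_positions n e x y"
proof -
  have nth_eq: "W (x ! j, y ! j) = W (x' ! j, y' ! j)"
    if "chan_n W x y = chan_n W x' y'" "j < n" for W :: "nat \<times> nat \<Rightarrow> nat option" and j
    using arg_cong[OF that(1), of "\<lambda>zs. zs ! j"] that(2) assms by (simp add: chan_n_def)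
  show "diff_positions n x x' \<subseteq> erased_positions n e x y"
    if "chan_n (fst \<circ> erasure_channel e) x y = chan_n (fst \<circ> erasure_channel e) x' y'"
  proof
    fix j assume "j \<in> diff_positions n x x'"
    then have "j < n" "x ! j \<noteq> x' ! j" by (auto simp: diff_positions_def)
    with nth_eq[OF that \<open>j < n\<close>] show "j \<in> erased_positions n e x y"
      by (auto simp: erased_positions_def erasure_channel_def split: if_splits)
  qed
  show "diff_positions n y y' \<subseteq> erased_positions n e x y"
    if "chan_n (snd \<circ> erasure_channel e) x y = chan_n (snd \<circ> erasure_channel e) x' y'"
  proof
    fix j assume "j \<in> diff_positions n y y'"
    then have "j < n" "y ! j \<noteq> y' ! j" by (auto simp: diff_positions_def)
    with nth_eq[OF that \<open>j < n\<close>] show "j \<in> erased_positions n e x y"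
      by (auto simp: erased_positions_def erasure_channel_def split: if_splits)
  qed
qed

text \<open>Otherwise the D erased positions would carry more than 2 eps Q^2 distinct erased pairs.\<close>
lemma card_erased_positions_lt:
  assumes "diverse_pair Q n d (2 * eps) x y" "x \<in> blocks Q n" "y \<in> blocks Q n"
    and "real D = d * real n"
    and few_erasures: "real (card {p \<in> {1..Q} \<times> {1..Q}. e p}) \<le> 2 * eps * real Q ^ 2"
  shows "card (erased_positions n e x y) < D"
proof (rule ccontr)
  assume "\<not> card (erased_positions n e x y) < D"
  then have "D \<le> card (erased_positions n e x y)" by simp
  then obtain I where I: "I \<subseteq> erased_positions n e x y" "card I = D"
    using obtain_subset_with_card_n by blast
  have "I \<subseteq> {0..<n}" using I(1) by (auto simp: erased_positions_def)
  then have "real (card ((\<lambda>j. (x ! j, y ! j)) ` I)) > 2 * eps * real Q ^ 2"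
    using assms(1,4) I(2) unfolding diverse_pair_def by simp
  moreover have "(\<lambda>j. (x ! j, y ! j)) ` I \<subseteq> {p \<in> {1..Q} \<times> {1..Q}. e p}"
  proof
    fix p assume "p \<in> (\<lambda>j. (x ! j, y ! j)) ` I"
    then obtain j where "j \<in> I" "p = (x ! j, y ! j)" by blast
    then have "j < n" "e p" using I(1) by (auto simp: erased_positions_def)
    then have "x ! j \<in> set x" "y ! j \<in> set y" using assms(2,3) by (simp_all add: blocks_def)
    then show "p \<in> {p \<in> {1..Q} \<times> {1..Q}. e p}"
      using \<open>p = (x ! j, y ! j)\<close> \<open>e p\<close> assms(2,3) by (auto simp: blocks_def)
  qed
  then have "card ((\<lambda>j. (x ! j, y ! j)) ` I) \<le> card {p \<in> {1..Q} \<times> {1..Q}. e p}"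
    by (intro card_mono) auto
  ultimately show False using few_erasures by linarith
qed

lemma diverse_pair_length_nonzero:
  assumes "diverse_pair Q n d eps x y" "0 \<le> eps"
  shows "d * real n \<noteq> 0"
proof
  assume "d * real n = 0"
  then have "real (card ((\<lambda>j. (x ! j, y ! j)) ` {})) > eps * real Q ^ 2"
    using assms(1) unfolding diverse_pair_def by (metis card.empty empty_subsetI of_nat_0)
  moreover have "0 \<le> eps * real Q ^ 2" using assms(2) by simp
  ultimately show False by simp
qed

lemma log2_ge_of_card_le_mult:
  fixes M a q n D :: nat and \<delta> :: real
  assumes "real a \<ge> real (2 ^ q) powr (real n * (1 - \<delta>))" and "a \<le> M * (2 ^ n * (2 ^ q) ^ D)"
  shows "0 < M" "real q * real n * (1 - \<delta>) - real n - real q * real D \<le> log 2 (real M)"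
proof -
  have "real (2 ^ q) powr (real n * (1 - \<delta>)) = 2 powr (real q * real n * (1 - \<delta>))"
    by (simp add: powr_realpow[symmetric] powr_powr mult.assoc)
  moreover have "real (M * (2 ^ n * (2 ^ q) ^ D)) = real M * 2 powr (real n + real q * real D)"
    by (simp add: powr_add powr_realpow[symmetric] powr_powr power_mult[symmetric])
  ultimately have "2 powr (real q * real n * (1 - \<delta>)) \<le> real M * 2 powr (real n + real q * real D)"
    using assms by (metis of_nat_le_iff order_trans)
  then have le: "2 powr (real q * real n * (1 - \<delta>) - real n - real q * real D) \<le> real M"
    by (simp add: powr_diff powr_add divide_le_eq)
  then show "0 < M" by (smt (verit) of_nat_0_less_iff powr_gt_zero)
  with le show "real q * real n * (1 - \<delta>) - real n - real q * real D \<le> log 2 (real M)"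
    by (simp add: le_log_iff)
qed

lemma zero_error_rate_erasure_channel_ge:
  fixes q n D :: nat and eps d \<delta>1 \<delta>2 :: real
  assumes "n \<ge> 1" and AB: "A \<subseteq> blocks (2 ^ q) n" "B \<subseteq> blocks (2 ^ q) n"
    and diverse: "diverse_sets (2 ^ q) n d (2 * eps) A B"
    and card_A: "real (card A) \<ge> real (2 ^ q) powr (real n * (1 - \<delta>1))"
    and card_B: "real (card B) \<ge> real (2 ^ q) powr (real n * (1 - \<delta>2))"
    and D: "real D = d * real n" "D \<ge> 1"
    and few_erasures: "real (card {p \<in> {1..2 ^ q} \<times> {1..2 ^ q}. e p}) \<le> 2 * eps * real (2 ^ q) ^ 2"
  shows "2 * real q * (1 - ((\<delta>1 + \<delta>2) / 2 + d)) - 2 \<le> zero_error_rate (2 ^ q) (erasure_channel e) n"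
proof -
  have "finite A" "finite B" using AB finite_blocks finite_subset by blast+
  obtain A' where A': "A' \<subseteq> A" "min_distance_ge n D A'" "card A \<le> card A' * (2 ^ n * (2 ^ q) ^ D)"
    using ex_min_distance_subset[OF \<open>finite A\<close> AB(1) _ D(2)] by auto
  obtain B' where B': "B' \<subseteq> B" "min_distance_ge n D B'" "card B \<le> card B' * (2 ^ n * (2 ^ q) ^ D)"
    using ex_min_distance_subset[OF \<open>finite B\<close> AB(2) _ D(2)] by auto
  note log_A' = log2_ge_of_card_le_mult[OF card_A A'(3)]
  note log_B' = log2_ge_of_card_le_mult[OF card_B B'(3)]
  have "finite A'" "finite B'" using A'(1) B'(1) \<open>finite A\<close> \<open>finite B\<close> finite_subset by blast+
  have few: "card (erased_positions n e x y) < D" if "x \<in> A'" "y \<in> B'" for x y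
  proof -
    have "x \<in> A" "y \<in> B" using that A'(1) B'(1) by auto
    then show ?thesis
      using AB diverse D(1) few_erasures unfolding diverse_sets_def
      by (intro card_erased_positions_lt[where d = d and eps = eps]) auto
  qed
  have code: "zero_error_code (2 ^ q) (erasure_channel e) n (card A') (card B')"
  proof (rule zero_error_code_of_determined)
    show "A' \<subseteq> blocks (2 ^ q) n" "B' \<subseteq> blocks (2 ^ q) n" using A'(1) B'(1) AB by auto
    show "finite A'" "finite B'" "A' \<noteq> {}" "B' \<noteq> {}"
      using \<open>finite A'\<close> \<open>finite B'\<close> log_A'(1) log_B'(1) by auto
    fix x x' y y' assume "x \<in> A'" "x' \<in> A'" "y \<in> B'" "y' \<in> B'"
    then have lengths: "length x = n" "length x' = n" "length y = n" "length y' = n"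
      using A'(1) B'(1) AB by (auto simp: blocks_def)
    have "card (diff_positions n u u') < D" if "diff_positions n u u' \<subseteq> erased_positions n e x y" for u u'
      using card_mono[OF _ that] few[OF \<open>x \<in> A'\<close> \<open>y \<in> B'\<close>] by (simp add: erased_positions_def)
    then show "chan_n (fst \<circ> erasure_channel e) x y = chan_n (fst \<circ> erasure_channel e) x' y' \<Longrightarrow> x = x'"
      and "chan_n (snd \<circ> erasure_channel e) x y = chan_n (snd \<circ> erasure_channel e) x' y' \<Longrightarrow> y = y'"
      using diff_positions_subset_erased_positions[OF lengths] A'(2) B'(2)
        \<open>x \<in> A'\<close> \<open>x' \<in> A'\<close> \<open>y \<in> B'\<close> \<open>y' \<in> B'\<close>
      unfolding min_distance_ge_def by (meson not_le)+
  qed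
  have "real n * (2 * real q * (1 - ((\<delta>1 + \<delta>2) / 2 + d)) - 2)
      = (real q * real n * (1 - \<delta>1) - real n - real q * real D)
        + (real q * real n * (1 - \<delta>2) - real n - real q * real D)"
    using D(1) by (simp add: algebra_simps)
  also have "\<dots> \<le> log 2 (real (card A')) + log 2 (real (card B'))"
    using log_A'(2) log_B'(2) by (rule add_mono)
  also have "\<dots> = log 2 (real (card A' * card B'))"
    using log_A'(1) log_B'(1) by (simp add: log_mult)
  finally have "2 * real q * (1 - ((\<delta>1 + \<delta>2) / 2 + d)) - 2 \<le> log 2 (real (card A' * card B')) / real n"
    using \<open>n \<ge> 1\<close> by (simp add: pos_le_divide_eq mult.commute)
  also have "\<dots> \<le> zero_error_rate (2 ^ q) (erasure_channel e) n"
    by (rule zero_error_rate_ge[OF code])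
  finally show ?thesis .
qed

theorem theorem3:
  fixes q n :: nat and eps d \<delta>1 \<delta>2 :: real and A B :: "nat list set"
  assumes "q \<ge> 1" and "n \<ge> 1"
    and "0 \<le> eps" and "eps \<le> 1"
    and "0 \<le> d" and "d \<le> 1" and "d * real n \<in> \<int>"
    and "\<delta>1 \<ge> 0" and "\<delta>2 \<ge> 0"
    and "A \<subseteq> blocks (2 ^ q) n" and "B \<subseteq> blocks (2 ^ q) n"
    and "diverse_sets (2 ^ q) n d (2 * eps) A B"
    and "real (card A) \<ge> real (2 ^ q) powr (real n * (1 - \<delta>1))"
    and "real (card B) \<ge> real (2 ^ q) powr (real n * (1 - \<delta>2))"
  shows "measure_pmf.prob (channel_dist (2 ^ q) eps)
           {W. zero_error_rate (2 ^ q) W n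
                 \<ge> 2 * real q * (1 - ((\<delta>1 + \<delta>2) / 2 + d)) - 2} \<ge> 1 / 2"
proof -
  define K :: "(nat \<times> nat) set" where "K = {1..2 ^ q} \<times> {1..2 ^ q}"
  define bound where "bound = 2 * real q * (1 - ((\<delta>1 + \<delta>2) / 2 + d)) - 2"
  obtain D :: nat where D: "real D = d * real n"
    using \<open>d * real n \<in> \<int>\<close> \<open>0 \<le> d\<close> by (metis Ints_cases mult_nonneg_nonneg of_int_0_le_iff of_nat_0_le_iff of_nat_nat)
  have "0 < real (card A)" "0 < real (card B)"
    by (rule order.strict_trans2[OF _ assms(13)] order.strict_trans2[OF _ assms(14)], simp)+
  then obtain x y where "x \<in> A" "y \<in> B" by fastforce
  then have "diverse_pair (2 ^ q) n d (2 * eps) x y"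
    using assms(12) by (simp add: diverse_sets_def)
  then have "d * real n \<noteq> 0" by (rule diverse_pair_length_nonzero) (use \<open>0 \<le> eps\<close> in simp)
  then have "D \<ge> 1" using D by (cases D) auto
  have "1/2 \<le> measure_pmf.prob (Pi_pmf K False (\<lambda>_. bernoulli_pmf eps))
                {e. real (card {p\<in>K. e p}) \<le> 2 * eps * real (card K)}"
    by (rule prob_Pi_bernoulli_count_le_twice_mean[OF _ assms(3,4)]) (simp add: K_def)
  also have "\<dots> \<le> measure_pmf.prob (Pi_pmf K False (\<lambda>_. bernoulli_pmf eps))
                    (erasure_channel -` {W. bound \<le> zero_error_rate (2 ^ q) W n})"
    using zero_error_rate_erasure_channel_ge[OF assms(2,10,11,12,13,14) D \<open>D \<ge> 1\<close>]
    by (intro measure_pmf.finite_measure_mono) (auto simp: K_def bound_def power2_eq_square)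
  also have "\<dots> = measure_pmf.prob (channel_dist (2 ^ q) eps) {W. bound \<le> zero_error_rate (2 ^ q) W n}"
    by (simp add: channel_dist_eq_map_erasure_channel K_def)
  finally show ?thesis unfolding bound_def .
qed

end
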